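(* Suppose all dynamical systems in $\mathcal{F}$ are $(\bar C_\rho,\bar\rho)$-stable with $\bar\rho<1$ and the algorithmic stability condition for dynamical systems (below) holds with constant $K$. Assume input and noise spaces $\mathcal{X},\mathcal{W}$ are bounded by $\bar x,\bar w$. Let $W = (\mathbf{w}_1, \dots, \mathbf{w}_{m})$ and $W' = (\mathbf{w}_1, \dots, \mathbf{w}_{j-1}, \mathbf{w}'_j, \mathbf{w}_{j+1}, \dots, \mathbf{w}_{m})$ be two noise sequences differing only in the $j$'th term, producing trajectories $\mathcal{S}^{(m)}$ and $\mathcal{S}^{(m)}_j$ with final states $\mathbf{x}_m,\mathbf{x}'_m$. Then, for any $f \in \mathcal{F}$, $\mathrm{Alg} \in \mathcal{A}$, $W$, $W'$, $m$, and $j < m$, \[ \Big|\mathbb{E}_{\mathbf{x}_{m+1}}[\ell(\mathbf{x}_{m+1}, f^{\mathrm{Alg}}_{\mathcal{S}^{(m)}}(\mathbf{x}_m))] -\mathbb{E}_{\mathbf{x}_{m+1}}[\ell(\mathbf{x}_{m+1},f^{\mathrm{Alg}}_{\mathcal{S}^{(m)}_j}(\mathbf{x}'_m))] \Big|< \frac{K}{m} \frac{2\bar{C}_{\rho}\bar{w}}{1- \bar{\rho}}. \] Additionally, for sequences that differ only at their initial states $\mathbf{x}_0,\mathbf{x}_0'\in\mathcal{X}$, the same difference is $< \frac{K}{m} \frac{2\bar{C}_{\rho}\bar{x}}{1- \bar{\rho}}$.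
   Context: Dynamics: $\mathbf{x}_i=f(\mathbf{x}_{i-1})+\mathbf{w}_i$, $\mathbf{w}_i\in\mathcal{W}$; an algorithm maps the trajectory prefix $\mathcal{S}^{(m)}=(\mathbf{x}_0,\dots,\mathbf{x}_m)$ to a predictor $f^{\mathrm{Alg}}_{\mathcal{S}^{(m)}}:\mathcal{X}\to\mathcal{X}$. $(C_\rho,\rho)$-stability: denoting by $f^{(m)}(\mathbf{x}_0)$ the state after $m$ steps from $\mathbf{x}_0$ under a given noise sequence, $\|f^{(m)}(\mathbf{x}_0)-f^{(m)}(\mathbf{x}_0')\|_2\leq C_\rho\rho^m\|\mathbf{x}_0-\mathbf{x}_0'\|_2$ for all initial states, $m\geq1$ and noise in $\mathcal{W}$. Algorithmic stability for dynamical systems: if $\mathcal{S}^j$ is obtained from $\mathcal{S}=(\mathbf{x}_0,\dots,\mathbf{x}_m)$ by replacing $\mathbf{w}_j$ with $\mathbf{w}'_j$ (or $\mathbf{x}_0$ by $\mathbf{x}_0'$ when $j=0$), yielding states $(\mathbf{x}'_j,\dots,\mathbf{x}'_m)$, then $|\mathbb{E}_{\mathbf{w}_{m+1}}[\ell(\mathbf{x}_{m+1},f^{\mathrm{Alg}}_{\mathcal{S}}(\mathbf{x}_m))]-\mathbb{E}_{\mathbf{w}_{m+1}}[\ell(\mathbf{x}_{m+1},f^{\mathrm{Alg}}_{\mathcal{S}^j}(\mathbf{x}'_m))]|\leq\frac{K}{m}\sum_{i=j}^m\|\mathbf{x}_i-\mathbf{x}'_i\|_2$.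
   Formalization: The stability constant satisfies $\bar C_\rho \geq 1$, the numbers $\bar\rho$, K, $\bar x$, $\bar w$ are positive, and f(x)+w lies in X for every f in F, x in X and w in W. Each condition added here is assumed in the paper as well or is needed for the statement above to hold. *)

theory Defs
  imports "HOL-Probability.Probability"
begin

text \<open>State after n steps of x_i = f(x_{i-1}) + w_i started at x0 (w 0 is unused).\<close>
fun traj :: "('a::real_normed_vector \<Rightarrow> 'a) \<Rightarrow> 'a \<Rightarrow> (nat \<Rightarrow> 'a) \<Rightarrow> nat \<Rightarrow> 'a" where
  "traj f x0 w 0 = x0"
| "traj f x0 w (Suc n) = f (traj f x0 w n) + w (Suc n)"

definition prefix :: "('a::real_normed_vector \<Rightarrow> 'a) \<Rightarrow> 'a \<Rightarrow> (nat \<Rightarrow> 'a) \<Rightarrow> nat \<Rightarrow> 'a list" where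
  "prefix f x0 w m = map (traj f x0 w) [0..<Suc m]"

definition exp_loss :: "'a::real_normed_vector measure \<Rightarrow> ('a \<Rightarrow> 'a \<Rightarrow> real) \<Rightarrow> ('a \<Rightarrow> 'a)
    \<Rightarrow> ('a list \<Rightarrow> 'a \<Rightarrow> 'a) \<Rightarrow> 'a list \<Rightarrow> 'a \<Rightarrow> real" where
  "exp_loss D loss f alg S x = (\<integral>w. loss (f x + w) (alg S x) \<partial>D)"

definition sys_stable :: "'a::real_normed_vector set \<Rightarrow> 'a set \<Rightarrow> ('a \<Rightarrow> 'a) \<Rightarrow> real \<Rightarrow> real \<Rightarrow> bool" where
  "sys_stable X W f C \<rho> \<longleftrightarrow>
    (\<forall>x0\<in>X. \<forall>x0'\<in>X. \<forall>w. (\<forall>i. w i \<in> W) \<longrightarrow>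
      (\<forall>m\<ge>1. norm (traj f x0 w m - traj f x0' w m) \<le> C * \<rho> ^ m * norm (x0 - x0')))"

definition alg_stable :: "'a::real_normed_vector set \<Rightarrow> 'a set \<Rightarrow> 'a measure \<Rightarrow> ('a \<Rightarrow> 'a \<Rightarrow> real)
    \<Rightarrow> ('a \<Rightarrow> 'a) set \<Rightarrow> ('a list \<Rightarrow> 'a \<Rightarrow> 'a) set \<Rightarrow> real \<Rightarrow> bool" where
  "alg_stable X W D loss F A K \<longleftrightarrow>
    (\<forall>f\<in>F. \<forall>alg\<in>A. \<forall>x0\<in>X. \<forall>w. (\<forall>i. w i \<in> W) \<longrightarrow> (\<forall>m\<ge>1.
      (\<forall>j w'. 1 \<le> j \<and> j \<le> m \<and> w' \<in> W \<longrightarrow>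
        \<bar>exp_loss D loss f alg (prefix f x0 w m) (traj f x0 w m)
         - exp_loss D loss f alg (prefix f x0 (w(j := w')) m) (traj f x0 (w(j := w')) m)\<bar>
        \<le> K / real m * (\<Sum>i=j..m. norm (traj f x0 w i - traj f x0 (w(j := w')) i))) \<and>
      (\<forall>x0'\<in>X.
        \<bar>exp_loss D loss f alg (prefix f x0 w m) (traj f x0 w m)
         - exp_loss D loss f alg (prefix f x0' w m) (traj f x0' w m)\<bar>
        \<le> K / real m * (\<Sum>i=0..m. norm (traj f x0 w i - traj f x0' w i)))))"

end

theory Submission
  imports Defs
begin

text \<open>A perturbation at time j (of the noise, or of the initial state when j = 0) leaves the
  trajectory unchanged before j and moves the state at time j by at most 2 wb (resp. 2 xb).
  From then on both trajectories are driven by the same noise, so by stability their distance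
  at time j + k is at most C \<rho>^k times that gap. Summing the geometric series bounds the
  right-hand side of algorithmic stability by K/m \<cdot> 2 C wb / (1 - \<rho>), strictly because
  \<rho> > 0 makes every neglected tail term positive.\<close>

lemma traj_shift: "traj f x0 w (j + k) = traj f (traj f x0 w j) (\<lambda>i. w (j + i)) k"
  by (induction k) auto

lemma traj_cong: "(\<And>i. 1 \<le> i \<Longrightarrow> i \<le> n \<Longrightarrow> v i = v' i) \<Longrightarrow> traj f x v n = traj f x v' n"
  by (induction n) auto

lemma traj_in:
  assumes "x0 \<in> X" "\<forall>i. w i \<in> W" "\<forall>x\<in>X. \<forall>v\<in>W. f x + v \<in> X"
  shows "traj f x0 w n \<in> X"
  using assms by (induction n) auto

lemma traj_fun_upd_less: "n < j \<Longrightarrow> traj f x0 (w(j := w')) n = traj f x0 w n"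
  by (rule traj_cong) auto

lemma traj_fun_upd_shift:
  "traj f x0 (w(j := w')) (j + k) = traj f (traj f x0 (w(j := w')) j) (\<lambda>i. w (j + i)) k"
  by (simp only: traj_shift) (rule traj_cong, simp)

lemma norm_diff_le_double_bound:
  "\<forall>x\<in>S. norm x \<le> b \<Longrightarrow> x \<in> S \<Longrightarrow> y \<in> S \<Longrightarrow> norm (x - y) \<le> 2 * b"
  by (metis add_mono mult_2 norm_triangle_le_diff)

lemma sys_stable_traj_dist:
  assumes "sys_stable X W f C \<rho>" "1 \<le> C" "x0 \<in> X" "x0' \<in> X" "\<forall>i. w i \<in> W"
  shows "norm (traj f x0 w k - traj f x0' w k) \<le> C * \<rho> ^ k * norm (x0 - x0')"
proof (cases "k = 0")
  case True
  then show ?thesis using assms(2) by (simp add: mult_le_cancel_right1)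
next
  case False
  then show ?thesis using assms by (simp add: sys_stable_def)
qed

lemma sum_le_geometric_less:
  fixes \<rho> B :: real
  assumes "0 < \<rho>" "\<rho> < 1" "0 < B" "\<And>i. i \<le> n \<Longrightarrow> a i \<le> B * \<rho> ^ i"
  shows "(\<Sum>i=0..n. a i) < B / (1 - \<rho>)"
proof -
  have "(\<Sum>i=0..n. a i) \<le> B * (\<Sum>i<Suc n. \<rho> ^ i)"
    using assms(4) by (auto simp: sum_distrib_left atLeast0AtMost lessThan_Suc_atMost intro!: sum_mono)
  also have "(\<Sum>i<Suc n. \<rho> ^ i) < (\<Sum>i. \<rho> ^ i)"
    using assms(1,2) by (intro sum_less_suminf summable_geometric) auto
  also have "(\<Sum>i. \<rho> ^ i) = 1 / (1 - \<rho>)"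
    using assms(1,2) by (intro suminf_geometric) auto
  finally show ?thesis using assms(3) by simp
qed

lemma sys_stable_sum_traj_dist_less:
  assumes "sys_stable X W f C \<rho>" "1 \<le> C" "0 < \<rho>" "\<rho> < 1"
    and "x0 \<in> X" "x0' \<in> X" "\<forall>i. w i \<in> W" "norm (x0 - x0') \<le> d" "0 < d"
  shows "(\<Sum>k=0..n. norm (traj f x0 w k - traj f x0' w k)) < C * d / (1 - \<rho>)"
proof (rule sum_le_geometric_less)
  fix k
  have "norm (traj f x0 w k - traj f x0' w k) \<le> C * \<rho> ^ k * norm (x0 - x0')"
    using sys_stable_traj_dist assms(1,2,5-7) .
  also have "\<dots> \<le> C * \<rho> ^ k * d"
    using assms(2,3,8) by (intro mult_left_mono) auto
  finally show "norm (traj f x0 w k - traj f x0' w k) \<le> C * d * \<rho> ^ k"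
    by (simp add: algebra_simps)
qed (use assms in auto)

lemma sys_stable_sum_noise_perturbation_less:
  assumes "sys_stable X W f C \<rho>" "1 \<le> C" "0 < \<rho>" "\<rho> < 1"
    and closed: "\<forall>x\<in>X. \<forall>v\<in>W. f x + v \<in> X"
    and "x0 \<in> X" "\<forall>i. w i \<in> W" "w' \<in> W" "\<forall>v\<in>W. norm v \<le> wb" "0 < wb"
    and "1 \<le> j" "j \<le> m"
  shows "(\<Sum>i=j..m. norm (traj f x0 w i - traj f x0 (w(j := w')) i)) < 2 * C * wb / (1 - \<rho>)"
proof -
  obtain p where j: "j = Suc p" using \<open>1 \<le> j\<close> by (cases j) auto
  define x where "x = traj f x0 w p"
  have "x \<in> X" unfolding x_def using traj_in assms(6,7) closed .
  then have start: "f x + w j \<in> X" "f x + w' \<in> X" using closed assms(7,8) by auto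
  have gap: "norm ((f x + w j) - (f x + w')) \<le> 2 * wb"
    using norm_diff_le_double_bound[OF assms(9)] assms(7,8) by simp
  define v where "v = (\<lambda>i. w (j + i))"
  have shift: "traj f x0 w (j + k) = traj f (f x + w j) v k"
    "traj f x0 (w(j := w')) (j + k) = traj f (f x + w') v k" for k
    unfolding v_def traj_fun_upd_shift
    by (simp_all only: traj_shift) (simp_all add: j x_def traj_fun_upd_less)
  have "(\<Sum>i=j..m. norm (traj f x0 w i - traj f x0 (w(j := w')) i))
      = (\<Sum>k=0..m-j. norm (traj f x0 w (j + k) - traj f x0 (w(j := w')) (j + k)))"
    using sum.atLeastAtMost_shift_0[of j m] \<open>j \<le> m\<close> by (simp add: comp_def)
  also have "\<dots> = (\<Sum>k=0..m-j. norm (traj f (f x + w j) v k - traj f (f x + w') v k))"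
    by (simp only: shift)
  also have "\<dots> < C * (2 * wb) / (1 - \<rho>)"
    using assms(1-4,7,10) start gap unfolding v_def by (intro sys_stable_sum_traj_dist_less) auto
  finally show ?thesis by (simp add: algebra_simps)
qed

theorem lemma6:
  fixes X W :: "'a::real_normed_vector set" and D :: "'a measure"
    and loss :: "'a \<Rightarrow> 'a \<Rightarrow> real" and F :: "('a \<Rightarrow> 'a) set"
    and A :: "('a list \<Rightarrow> 'a \<Rightarrow> 'a) set" and C \<rho> K xb wb :: real
  assumes "prob_space D" and "AE w in D. w \<in> W"
    and "\<forall>f\<in>F. \<forall>x\<in>X. \<forall>v\<in>W. f x + v \<in> X"
    and "\<forall>f\<in>F. sys_stable X W f C \<rho>"
    and "0 < \<rho>" and "\<rho> < 1" and "1 \<le> C" and "0 < K"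
    and "alg_stable X W D loss F A K"
    and "\<forall>x\<in>X. norm x \<le> xb" and "\<forall>v\<in>W. norm v \<le> wb"
    and "0 < xb" and "0 < wb"
  shows "(\<forall>f\<in>F. \<forall>alg\<in>A. \<forall>x0\<in>X. \<forall>w. (\<forall>i. w i \<in> W) \<longrightarrow> (\<forall>w'\<in>W. \<forall>m j. 1 \<le> j \<and> j < m \<longrightarrow>
            \<bar>exp_loss D loss f alg (prefix f x0 w m) (traj f x0 w m)
             - exp_loss D loss f alg (prefix f x0 (w(j := w')) m) (traj f x0 (w(j := w')) m)\<bar>
            < K / real m * (2 * C * wb / (1 - \<rho>))))
       \<and> (\<forall>f\<in>F. \<forall>alg\<in>A. \<forall>x0\<in>X. \<forall>x0'\<in>X. \<forall>w. (\<forall>i. w i \<in> W) \<longrightarrow> (\<forall>m. 0 < m \<longrightarrow>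
            \<bar>exp_loss D loss f alg (prefix f x0 w m) (traj f x0 w m)
             - exp_loss D loss f alg (prefix f x0' w m) (traj f x0' w m)\<bar>
            < K / real m * (2 * C * xb / (1 - \<rho>))))"
proof (intro conjI ballI allI impI)
  fix f alg x0 w' and m j :: nat and w :: "nat \<Rightarrow> 'a"
  assume hyps: "f \<in> F" "alg \<in> A" "x0 \<in> X" "\<forall>i. w i \<in> W" "w' \<in> W" "1 \<le> j \<and> j < m"
  let ?S = "\<Sum>i=j..m. norm (traj f x0 w i - traj f x0 (w(j := w')) i)"
  have "?S < 2 * C * wb / (1 - \<rho>)"
    using hyps assms by (intro sys_stable_sum_noise_perturbation_less[where X = X and W = W]) auto
  then have less: "K / real m * ?S < K / real m * (2 * C * wb / (1 - \<rho>))"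
    using hyps \<open>0 < K\<close> by (intro mult_strict_left_mono) auto
  have "1 \<le> m" using hyps by simp
  note stable = assms(9)[unfolded alg_stable_def, rule_format,
      OF hyps(1-3), of w, OF hyps(4)[rule_format] this]
  show "\<bar>exp_loss D loss f alg (prefix f x0 w m) (traj f x0 w m)
      - exp_loss D loss f alg (prefix f x0 (w(j := w')) m) (traj f x0 (w(j := w')) m)\<bar>
      < K / real m * (2 * C * wb / (1 - \<rho>))"
    using order_le_less_trans[OF conjunct1[OF stable, rule_format, of j w'] less] hyps by simp
next
  fix f alg x0 x0' m and w :: "nat \<Rightarrow> 'a"
  assume hyps: "f \<in> F" "alg \<in> A" "x0 \<in> X" "x0' \<in> X" "\<forall>i. w i \<in> W" "0 < (m::nat)"
  let ?S = "\<Sum>i=0..m. norm (traj f x0 w i - traj f x0' w i)"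
  have "?S < C * (2 * xb) / (1 - \<rho>)"
    using hyps assms norm_diff_le_double_bound[OF assms(10) hyps(3,4)]
    by (intro sys_stable_sum_traj_dist_less[where X = X and W = W]) auto
  then have less: "K / real m * ?S < K / real m * (2 * C * xb / (1 - \<rho>))"
    using hyps \<open>0 < K\<close> by (intro mult_strict_left_mono) (auto simp: ac_simps)
  have "1 \<le> m" using hyps by simp
  note stable = assms(9)[unfolded alg_stable_def, rule_format,
      OF hyps(1-3), of w, OF hyps(5)[rule_format] this]
  show "\<bar>exp_loss D loss f alg (prefix f x0 w m) (traj f x0 w m)
      - exp_loss D loss f alg (prefix f x0' w m) (traj f x0' w m)\<bar>
      < K / real m * (2 * C * xb / (1 - \<rho>))"
    using order_le_less_trans[OF conjunct2[OF stable, rule_format, of x0'] less] hyps by simp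
qed

end
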